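(* Let $p(z)=z^n+a_nz^{n-1}+\cdots+a_2z+a_1$ be a complex monic polynomial with $n\geq2$ and $a_1\neq0$. If $z\in\mathbb{C}$ is any zero of $p$, then $$|z|\leq\left\{\frac{1}{2}\sqrt{\frac{\delta+1+\sqrt{(\delta-1)^2+4\delta'}}{2}}+\frac{1}{2}\left(\frac{1}{2}\left(\delta_1+\delta+\sqrt{(\delta_1-\delta)^2+4\delta_2}\right)+1\right)^{1/4}\right\}^{1/2}.$$
   Context: Let $C_p$ be the $n\times n$ matrix whose first row is $(-a_n,-a_{n-1},\dots,-a_2,-a_1)$, whose entries $(k+1,k)$ equal $1$ for $k=1,\dots,n-1$, and whose other entries are $0$. Define numbers $b_j,c_j,d_j$ ($j=1,\dots,n$) by: the first row of $C_p^2$ is $(b_n,b_{n-1},\dots,b_1)$, the first row of $C_p^3$ is $(c_n,\dots,c_1)$, the first row of $C_p^4$ is $(d_n,\dots,d_1)$ (so $b_j=a_na_j-a_{j-1}$, $c_j=-a_nb_j+a_{n-1}a_j-a_{j-2}$ with $a_0=a_{-1}=0$). Set $\alpha=\sum_{j=1}^n|a_j|^2$, $\beta=\sum_{j=1}^n|b_j|^2$, $\gamma=-\sum_{j=1}^n b_j\overline{a_j}$, $\delta=\frac{1}{2}\left(\alpha+\beta+\sqrt{(\alpha-\beta)^2+4|\gamma|^2}\right)$; $\alpha'=\sum_{j=3}^n|a_j|^2$, $\beta'=\sum_{j=3}^n|b_j|^2$, $\gamma'=-\sum_{j=3}^n\overline{a_j}b_j$, $\delta'=\frac12\left(\alpha'+\beta'+\sqrt{(\alpha'-\beta')^2+4|\gamma'|^2}\right)$;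 $\alpha_1=\sum_{j=1}^n|d_j|^2$, $\beta_1=\sum_{j=1}^n|c_j|^2$, $\gamma_1=\sum_{j=1}^n d_j\overline{c_j}$, $\delta_1=\frac12\left(\alpha_1+\beta_1+\sqrt{(\alpha_1-\beta_1)^2+4|\gamma_1|^2}\right)$; $\gamma_2=\sum_{j=1}^n d_j\overline{b_j}$, $\gamma_3=\sum_{j=1}^n d_j\overline{a_j}$, $\gamma_4=\sum_{j=1}^n c_j\overline{b_j}$, $\gamma_5=\sum_{j=1}^n c_j\overline{a_j}$, and $\delta_2=\frac12\Big(|\gamma_2|^2+|\gamma_3|^2+|\gamma_4|^2+|\gamma_5|^2+\sqrt{\big((|\gamma_2|^2+|\gamma_3|^2)-(|\gamma_4|^2+|\gamma_5|^2)\big)^2+4|\gamma_2\overline{\gamma_4}+\gamma_3\overline{\gamma_5}|^2}\Big)$. *)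

theory Defs
  imports Complex_Main "Jordan_Normal_Form.Matrix"
begin

text \<open>Coefficients: p(z) = z^n + a n z^(n-1) + ... + a 2 z + a 1, indexed a 1, ..., a n.
  Matrices are 0-indexed: entry (i,j) below is entry (i+1,j+1) of the paper.\<close>

definition companion :: "nat \<Rightarrow> (nat \<Rightarrow> complex) \<Rightarrow> complex mat" where
  "companion n a = mat n n (\<lambda>(i,j). if i = 0 then - a (n - j) else if i = j + 1 then 1 else 0)"

text \<open>Entry j (1 <= j <= n) of the first row of C_p^k, with first row written as (x_n, ..., x_1).\<close>
definition frow :: "nat \<Rightarrow> (nat \<Rightarrow> complex) \<Rightarrow> nat \<Rightarrow> nat \<Rightarrow> complex" where
  "frow n a k j = (companion n a ^\<^sub>m k) $$ (0, n - j)"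

definition bco :: "nat \<Rightarrow> (nat \<Rightarrow> complex) \<Rightarrow> nat \<Rightarrow> complex" where
  "bco n a j = frow n a 2 j"
definition cco :: "nat \<Rightarrow> (nat \<Rightarrow> complex) \<Rightarrow> nat \<Rightarrow> complex" where
  "cco n a j = frow n a 3 j"
definition dco :: "nat \<Rightarrow> (nat \<Rightarrow> complex) \<Rightarrow> nat \<Rightarrow> complex" where
  "dco n a j = frow n a 4 j"

definition alpha :: "nat \<Rightarrow> (nat \<Rightarrow> complex) \<Rightarrow> real" where
  "alpha n a = (\<Sum>j=1..n. (cmod (a j))^2)"
definition beta :: "nat \<Rightarrow> (nat \<Rightarrow> complex) \<Rightarrow> real" where
  "beta n a = (\<Sum>j=1..n. (cmod (bco n a j))^2)"
definition gamma :: "nat \<Rightarrow> (nat \<Rightarrow> complex) \<Rightarrow> complex" where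
  "gamma n a = - (\<Sum>j=1..n. bco n a j * cnj (a j))"
definition delta :: "nat \<Rightarrow> (nat \<Rightarrow> complex) \<Rightarrow> real" where
  "delta n a = (alpha n a + beta n a
     + sqrt ((alpha n a - beta n a)^2 + 4 * (cmod (gamma n a))^2)) / 2"

definition alpha' :: "nat \<Rightarrow> (nat \<Rightarrow> complex) \<Rightarrow> real" where
  "alpha' n a = (\<Sum>j=3..n. (cmod (a j))^2)"
definition beta' :: "nat \<Rightarrow> (nat \<Rightarrow> complex) \<Rightarrow> real" where
  "beta' n a = (\<Sum>j=3..n. (cmod (bco n a j))^2)"
definition gamma' :: "nat \<Rightarrow> (nat \<Rightarrow> complex) \<Rightarrow> complex" where
  "gamma' n a = - (\<Sum>j=3..n. cnj (a j) * bco n a j)"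
definition delta' :: "nat \<Rightarrow> (nat \<Rightarrow> complex) \<Rightarrow> real" where
  "delta' n a = (alpha' n a + beta' n a
     + sqrt ((alpha' n a - beta' n a)^2 + 4 * (cmod (gamma' n a))^2)) / 2"

definition alpha1 :: "nat \<Rightarrow> (nat \<Rightarrow> complex) \<Rightarrow> real" where
  "alpha1 n a = (\<Sum>j=1..n. (cmod (dco n a j))^2)"
definition beta1 :: "nat \<Rightarrow> (nat \<Rightarrow> complex) \<Rightarrow> real" where
  "beta1 n a = (\<Sum>j=1..n. (cmod (cco n a j))^2)"
definition gamma1 :: "nat \<Rightarrow> (nat \<Rightarrow> complex) \<Rightarrow> complex" where
  "gamma1 n a = (\<Sum>j=1..n. dco n a j * cnj (cco n a j))"
definition delta1 :: "nat \<Rightarrow> (nat \<Rightarrow> complex) \<Rightarrow> real" where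
  "delta1 n a = (alpha1 n a + beta1 n a
     + sqrt ((alpha1 n a - beta1 n a)^2 + 4 * (cmod (gamma1 n a))^2)) / 2"

definition gamma2 :: "nat \<Rightarrow> (nat \<Rightarrow> complex) \<Rightarrow> complex" where
  "gamma2 n a = (\<Sum>j=1..n. dco n a j * cnj (bco n a j))"
definition gamma3 :: "nat \<Rightarrow> (nat \<Rightarrow> complex) \<Rightarrow> complex" where
  "gamma3 n a = (\<Sum>j=1..n. dco n a j * cnj (a j))"
definition gamma4 :: "nat \<Rightarrow> (nat \<Rightarrow> complex) \<Rightarrow> complex" where
  "gamma4 n a = (\<Sum>j=1..n. cco n a j * cnj (bco n a j))"
definition gamma5 :: "nat \<Rightarrow> (nat \<Rightarrow> complex) \<Rightarrow> complex" where
  "gamma5 n a = (\<Sum>j=1..n. cco n a j * cnj (a j))"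

definition delta2 :: "nat \<Rightarrow> (nat \<Rightarrow> complex) \<Rightarrow> real" where
  "delta2 n a =
    (let g2 = gamma2 n a; g3 = gamma3 n a; g4 = gamma4 n a; g5 = gamma5 n a;
         s = (cmod g2)^2 + (cmod g3)^2; t = (cmod g4)^2 + (cmod g5)^2
     in (s + t + sqrt ((s - t)^2 + 4 * (cmod (g2 * cnj g4 + g3 * cnj g5))^2)) / 2)"

end

theory Submission
  imports Defs "HOL-Analysis.Convex"
begin

text \<open>If p(z) = 0 then w = (1, z, ..., z^(n-1)) is, up to reversal, an eigenvector of C_p, so the
  first row of C_p^k pairs with w to give z^(n-1+k). Hence |z|^4 |w|^2 = |z^n|^2 + |z^(n+1)|^2
  + \<Sum>_(j\<ge>3) |z^(j-1)|^2 is the real part of the pairing of w with the vector v built from the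
  conjugated first rows of C_p and C_p^2 and the tail of w. Splitting v into two parts, each
  controlled by the top eigenvalue of a 2 \<times> 2 Gram matrix, gives |v|^2 \<le> \<lambda> Re \<langle>w, v\<rangle>, and
  Cauchy-Schwarz then yields |z|^4 \<le> \<lambda>. The same argument with the rows of C_p^3, C_p^4 and of
  C_p, C_p^2 gives |z|^8 \<le> \<mu> + 1. The stated bound is the square root of the average of
  \<surd>\<lambda> and (\<mu> + 1)^(1/4), both of which dominate |z|^2.\<close>

text \<open>The largest eigenvalue of the Hermitian matrix [[p, \<gamma>], [cnj \<gamma>, q]] with g = |\<gamma>|^2.\<close>
definition eig_max2 :: "real \<Rightarrow> real \<Rightarrow> real \<Rightarrow> real" where
  "eig_max2 p q g = (p + q + sqrt ((p - q)^2 + 4 * g)) / 2"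

lemma eig_max2_ge:
  assumes "0 \<le> g"
  shows "max p q \<le> eig_max2 p q g"
proof -
  have "\<bar>p - q\<bar> \<le> sqrt ((p - q)^2 + 4 * g)"
    using assms by (intro real_le_rsqrt) simp
  then show ?thesis unfolding eig_max2_def by (auto simp: max_def abs_le_iff)
qed

lemma eig_max2_nonneg: "0 \<le> p \<Longrightarrow> 0 \<le> g \<Longrightarrow> 0 \<le> eig_max2 p q g"
  using eig_max2_ge[of g p q] by linarith

lemma quadratic_form_le_eig_max2:
  assumes "0 \<le> g" "0 \<le> s" "0 \<le> t"
  shows "p * s + q * t + 2 * sqrt (g * s * t) \<le> eig_max2 p q g * (s + t)"
proof -
  define D where "D = sqrt ((p - q)^2 + 4 * g)"
  define X where "X = (q - p + D) / 2"
  define Y where "Y = (p - q + D) / 2"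
  have "\<bar>p - q\<bar> \<le> D"
    unfolding D_def using assms(1) by (intro real_le_rsqrt) simp
  then have "0 \<le> X" "0 \<le> Y" unfolding X_def Y_def by auto
  have "D^2 = (p - q)^2 + 4 * g"
    unfolding D_def using assms(1) by simp
  then have "X * Y = g" unfolding X_def Y_def by (simp add: algebra_simps power2_eq_square)
  then have "sqrt (g * s * t) = sqrt ((X * s) * (Y * t))" by (simp add: ac_simps)
  also have "\<dots> \<le> (X * s + Y * t) / 2"
    using \<open>0 \<le> X\<close> \<open>0 \<le> Y\<close> assms by (intro arith_geo_mean_sqrt) auto
  finally show ?thesis unfolding eig_max2_def D_def[symmetric] X_def Y_def by (simp add: field_simps)
qed

definition sqnorm :: "'i set \<Rightarrow> ('i \<Rightarrow> complex) \<Rightarrow> real" where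
  "sqnorm J x = (\<Sum>j\<in>J. (cmod (x j))^2)"

definition cinner :: "'i set \<Rightarrow> ('i \<Rightarrow> complex) \<Rightarrow> ('i \<Rightarrow> complex) \<Rightarrow> complex" where
  "cinner J x y = (\<Sum>j\<in>J. x j * cnj (y j))"

lemma sqnorm_nonneg: "0 \<le> sqnorm J x"
  unfolding sqnorm_def by (simp add: sum_nonneg)

lemma of_real_sqnorm: "complex_of_real (sqnorm J x) = cinner J x x"
  unfolding sqnorm_def cinner_def of_real_sum by (simp only: complex_norm_square)

lemma cinner_commute: "cinner J y x = cnj (cinner J x y)"
  unfolding cinner_def by (simp add: cnj_sum mult.commute)

lemma cmod_cinner_commute: "cmod (cinner J y x) = cmod (cinner J x y)"
  unfolding cinner_commute[of J y x] by (rule complex_mod_cnj)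

lemma cinner_add_right: "cinner J w (\<lambda>j. x j + y j) = cinner J w x + cinner J w y"
  unfolding cinner_def by (simp add: distrib_left sum.distrib)

lemma cinner_Cauchy_Schwarz: "cmod (cinner J x y) \<le> sqrt (sqnorm J x) * sqrt (sqnorm J y)"
proof -
  have "cmod (cinner J x y) \<le> (\<Sum>j\<in>J. cmod (x j) * cmod (y j))"
    unfolding cinner_def by (rule order_trans[OF norm_sum]) (simp add: norm_mult)
  also have "\<dots> \<le> sqrt (sqnorm J x * sqnorm J y)"
    unfolding sqnorm_def by (intro real_le_rsqrt Cauchy_Schwarz_ineq_sum)
  finally show ?thesis by (simp add: real_sqrt_mult)
qed

lemma sqnorm_add:
  "sqnorm J (\<lambda>j. x j + y j) = sqnorm J x + 2 * Re (cinner J x y) + sqnorm J y"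
proof -
  have "cinner J (\<lambda>j. x j + y j) (\<lambda>j. x j + y j)
      = cinner J x x + (cinner J x y + cnj (cinner J x y)) + cinner J y y"
    unfolding cinner_def by (simp add: algebra_simps sum.distrib cnj_sum)
  then have "complex_of_real (sqnorm J (\<lambda>j. x j + y j))
      = complex_of_real (sqnorm J x + 2 * Re (cinner J x y) + sqnorm J y)"
    by (simp add: of_real_sqnorm complex_add_cnj)
  then show ?thesis by (simp only: of_real_eq_iff)
qed

lemma sqnorm_combination:
  "sqnorm J (\<lambda>j. cnj (X j) * u + cnj (Y j) * v)
     = (cmod u)^2 * sqnorm J X + 2 * Re (u * cnj v * cinner J Y X) + (cmod v)^2 * sqnorm J Y"
proof -
  have "sqnorm J (\<lambda>j. cnj (X j) * u) = (cmod u)^2 * sqnorm J X" for X u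
    unfolding sqnorm_def by (simp add: norm_mult power_mult_distrib sum_distrib_left mult.commute)
  moreover have "cinner J (\<lambda>j. cnj (X j) * u) (\<lambda>j. cnj (Y j) * v) = u * cnj v * cinner J Y X"
    unfolding cinner_def by (simp add: sum_distrib_left algebra_simps)
  ultimately show ?thesis by (simp add: sqnorm_add)
qed

text \<open>The bound is the top eigenvalue of the Gram matrix of X and Y, i.e. the squared operator
  norm of the matrix with columns cnj X and cnj Y.\<close>
lemma sqnorm_combination_le:
  "sqnorm J (\<lambda>j. cnj (X j) * u + cnj (Y j) * v)
     \<le> eig_max2 (sqnorm J X) (sqnorm J Y) ((cmod (cinner J X Y))^2) * ((cmod u)^2 + (cmod v)^2)"
proof -
  define g where "g = (cmod (cinner J X Y))^2"
  have "Re (u * cnj v * cinner J Y X) \<le> cmod u * cmod v * cmod (cinner J X Y)"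
    using complex_Re_le_cmod[of "u * cnj v * cinner J Y X"]
    by (simp add: norm_mult cmod_cinner_commute)
  also have "\<dots> = sqrt (g * (cmod u)^2 * (cmod v)^2)"
    unfolding g_def by (simp add: real_sqrt_mult)
  finally have "sqnorm J (\<lambda>j. cnj (X j) * u + cnj (Y j) * v)
      \<le> sqnorm J X * (cmod u)^2 + sqnorm J Y * (cmod v)^2 + 2 * sqrt (g * (cmod u)^2 * (cmod v)^2)"
    unfolding sqnorm_combination by (simp add: mult.commute)
  also have "\<dots> \<le> eig_max2 (sqnorm J X) (sqnorm J Y) g * ((cmod u)^2 + (cmod v)^2)"
    unfolding g_def by (rule quadratic_form_le_eig_max2) simp_all
  finally show ?thesis unfolding g_def .
qed

lemma sqnorm_add_le_eig_max2:
  assumes "sqnorm J x \<le> p * s" "sqnorm J y \<le> q * t"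
    and "Re (cinner J x y) \<le> sqrt (g * s * t)"
    and "0 \<le> g" "0 \<le> s" "0 \<le> t"
  shows "sqnorm J (\<lambda>j. x j + y j) \<le> eig_max2 p q g * (s + t)"
  using assms quadratic_form_le_eig_max2[of g s t p q] unfolding sqnorm_add by linarith

text \<open>By Cauchy-Schwarz, N^2 \<le> |w|^2 |p|^2 \<le> |w|^2 L N for N = Re \<langle>w, p\<rangle>.\<close>
lemma Re_cinner_le_of_sqnorm_le:
  assumes "sqnorm J p \<le> L * Re (cinner J w p)" "0 \<le> L"
  shows "Re (cinner J w p) \<le> L * sqnorm J w"
proof (cases "Re (cinner J w p) \<le> 0")
  case True
  then show ?thesis using assms(2) sqnorm_nonneg[of J w] by (meson mult_nonneg_nonneg order_trans)
next
  case False
  define N where "N = Re (cinner J w p)"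
  have "N \<le> sqrt (sqnorm J w) * sqrt (sqnorm J p)"
    unfolding N_def using complex_Re_le_cmod cinner_Cauchy_Schwarz by (rule order_trans)
  then have "N^2 \<le> sqnorm J w * sqnorm J p"
    using False unfolding N_def
    by (metis linorder_not_le power_mono real_sqrt_mult real_sqrt_pow2 sqnorm_nonneg
        mult_nonneg_nonneg order_less_imp_le)
  also have "\<dots> \<le> sqnorm J w * (L * N)"
    using assms(1) sqnorm_nonneg[of J w] unfolding N_def by (rule mult_left_mono)
  finally have "N * N \<le> (L * sqnorm J w) * N" by (simp add: power2_eq_square ac_simps)
  then show ?thesis using False unfolding N_def by simp
qed

lemma cmod_cnj_mult_add_le:
  "cmod (cnj x * m + cnj y * k) \<le> sqrt ((cmod x)^2 + (cmod y)^2) * sqrt ((cmod m)^2 + (cmod k)^2)"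
proof -
  have "cmod (cnj x * m + cnj y * k) \<le> cmod x * cmod m + cmod y * cmod k"
    by (rule order_trans[OF norm_triangle_ineq]) (simp add: norm_mult)
  also have "\<dots> \<le> sqrt (((cmod x)^2 + (cmod y)^2) * ((cmod m)^2 + (cmod k)^2))"
    using Cauchy_Schwarz_ineq_sum[of "\<lambda>i. if i then cmod x else cmod y"
        "\<lambda>i. if i then cmod m else cmod k" UNIV]
    by (intro real_le_rsqrt) (simp add: UNIV_bool add.commute)
  finally show ?thesis by (simp add: real_sqrt_mult)
qed

lemma matrix2_norm_le:
  "(cmod (e * u + f * v))^2 + (cmod (g * u + h * v))^2
     \<le> eig_max2 ((cmod e)^2 + (cmod g)^2) ((cmod f)^2 + (cmod h)^2)
          ((cmod (cnj e * f + cnj g * h))^2) * ((cmod u)^2 + (cmod v)^2)"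
proof -
  define X where "X = (\<lambda>i. if i then cnj e else cnj g)"
  define Y where "Y = (\<lambda>i. if i then cnj f else cnj h)"
  have "cinner UNIV X Y = cnj e * f + cnj g * h"
    unfolding cinner_def X_def Y_def by (simp add: UNIV_bool)
  then show ?thesis
    using sqnorm_combination_le[of UNIV X u Y v]
    unfolding sqnorm_def X_def Y_def UNIV_bool by (simp add: mult.commute add.commute)
qed

lemma cinner_combinations:
  "cinner J (\<lambda>j. cnj (U j) * u + cnj (V j) * v) (\<lambda>j. cnj (X j) * x + cnj (Y j) * y)
     = cnj x * (cinner J X U * u + cinner J X V * v) + cnj y * (cinner J Y U * u + cinner J Y V * v)"
  unfolding cinner_def by (simp add: sum.distrib sum_distrib_left algebra_simps)

lemma cinner_combination_right:
  "cinner J w (\<lambda>j. cnj (X j) * u + cnj (Y j) * v)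
     = (\<Sum>j\<in>J. X j * w j) * cnj u + (\<Sum>j\<in>J. Y j * w j) * cnj v"
  unfolding cinner_def by (simp add: sum.distrib sum_distrib_left algebra_simps)

lemma sum_atLeastAtMost_if_ge:
  fixes l m n :: nat
  assumes "l \<le> m"
  shows "(\<Sum>j=l..n. if m \<le> j then f j else 0) = (\<Sum>j=m..n. f j)"
proof -
  have "{j \<in> {l..n}. m \<le> j} = {m..n}" using assms by auto
  then show ?thesis using sum.inter_filter[of "{l..n}" f "\<lambda>j. m \<le> j"] by simp
qed

lemma sqnorm_powers: "sqnorm J (\<lambda>j. z ^ (j - 1)) = (\<Sum>j\<in>J. (cmod z ^ 2) ^ (j - 1))"
  unfolding sqnorm_def by (simp add: norm_power power_mult[symmetric] mult.commute)

lemma sqnorm_powers_pos: "1 \<le> n \<Longrightarrow> 0 < sqnorm {1..n} (\<lambda>j. z ^ (j - 1))"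
  unfolding sqnorm_def by (rule sum_pos2[of _ 1]) auto

lemma cinner_extend_zero:
  fixes l m n :: nat
  assumes "l \<le> m"
  shows "cinner {l..n} x (\<lambda>j. if m \<le> j then w j else 0) = cinner {m..n} x w"
proof -
  have "cinner {l..n} x (\<lambda>j. if m \<le> j then w j else 0) = (\<Sum>j=l..n. if m \<le> j then x j * cnj (w j) else 0)"
    unfolding cinner_def by (intro sum.cong) auto
  also have "\<dots> = cinner {m..n} x w" unfolding cinner_def using assms by (rule sum_atLeastAtMost_if_ge)
  finally show ?thesis .
qed

lemma sqnorm_extend_zero:
  fixes l m n :: nat
  assumes "l \<le> m"
  shows "sqnorm {l..n} (\<lambda>j. if m \<le> j then w j else 0) = sqnorm {m..n} w"
proof -
  have "sqnorm {l..n} (\<lambda>j. if m \<le> j then w j else 0) = (\<Sum>j=l..n. if m \<le> j then (cmod (w j))^2 else 0)"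
    unfolding sqnorm_def by (intro sum.cong) auto
  also have "\<dots> = sqnorm {m..n} w" unfolding sqnorm_def using assms by (rule sum_atLeastAtMost_if_ge)
  finally show ?thesis .
qed

lemma companion_carrier: "companion n a \<in> carrier_mat n n"
  unfolding companion_def by simp

lemma companion_index: "i < n \<Longrightarrow> l < n \<Longrightarrow> companion n a $$ (i, l) =
    (if i = 0 then - a (n - l) else if i = l + 1 then 1 else 0)"
  unfolding companion_def by simp

lemma frow_one: "1 \<le> j \<Longrightarrow> j \<le> n \<Longrightarrow> frow n a 1 j = - a j"
  unfolding frow_def using companion_carrier[of n a] by (simp add: companion_index)

lemma sum_reverse_powers:
  "(\<Sum>j=1..n. F (n - j) * z ^ (j - 1)) = (\<Sum>l<n. F l * (z :: complex) ^ (n - 1 - l))"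
proof -
  have "(\<Sum>j=1..n. F (n - j) * z ^ (j - 1)) = (\<Sum>l<n. F (n - Suc l) * z ^ l)"
    by (simp add: sum.atLeast1_atMost_eq)
  also have "\<dots> = (\<Sum>l<n. (\<lambda>l. F l * z ^ (n - 1 - l)) (n - Suc l))"
    by (rule sum.cong) auto
  also have "\<dots> = (\<Sum>l<n. F l * z ^ (n - 1 - l))" by (rule sum.nat_diff_reindex)
  finally show ?thesis .
qed

lemma companion_mult_vec_powers:
  assumes "1 \<le> n" and root: "z ^ n + (\<Sum>j=1..n. a j * z ^ (j - 1)) = 0"
  shows "companion n a *\<^sub>v vec n (\<lambda>i. z ^ (n - 1 - i)) = z \<cdot>\<^sub>v vec n (\<lambda>i. z ^ (n - 1 - i))"
proof (rule eq_vecI)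
  fix i assume "i < dim_vec (z \<cdot>\<^sub>v vec n (\<lambda>i. z ^ (n - 1 - i)))"
  then have i: "i < n" by simp
  have "(companion n a *\<^sub>v vec n (\<lambda>i. z ^ (n - 1 - i))) $ i
      = (\<Sum>l<n. companion n a $$ (i, l) * z ^ (n - 1 - l))"
    using companion_carrier[of n a] i by (simp add: scalar_prod_def lessThan_atLeast0)
  also have "\<dots> = z * z ^ (n - 1 - i)"
  proof (cases "i = 0")
    case True
    have "(\<Sum>l<n. companion n a $$ (i, l) * z ^ (n - 1 - l)) = (\<Sum>l<n. - a (n - l) * z ^ (n - 1 - l))"
      by (intro sum.cong) (auto simp: companion_index True)
    also have "\<dots> = - (\<Sum>j=1..n. a (n - (n - j)) * z ^ (j - 1))"
      using sum_reverse_powers[of "\<lambda>l. - a (n - l)" n z] by (simp add: sum_negf)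
    also have "\<dots> = - (\<Sum>j=1..n. a j * z ^ (j - 1))"
      by (intro arg_cong[where f = uminus] sum.cong) auto
    also have "\<dots> = z ^ n" using root by (simp add: add_eq_0_iff)
    finally show ?thesis using assms(1) True by (simp add: power_eq_if)
  next
    case False
    then have "(\<Sum>l<n. companion n a $$ (i, l) * z ^ (n - 1 - l))
        = (\<Sum>l<n. if l = i - 1 then z ^ (n - 1 - l) else 0)"
      using i by (intro sum.cong) (auto simp: companion_index)
    also have "\<dots> = z ^ Suc (n - 1 - i)" using i False by (simp add: Suc_diff_Suc)
    finally show ?thesis by simp
  qed
  finally show "(companion n a *\<^sub>v vec n (\<lambda>i. z ^ (n - 1 - i))) $ i
      = (z \<cdot>\<^sub>v vec n (\<lambda>i. z ^ (n - 1 - i))) $ i" using i by simp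
qed (simp add: companion_carrier[THEN carrier_matD(1)])

lemma companion_pow_mult_vec_powers:
  assumes "1 \<le> n" "z ^ n + (\<Sum>j=1..n. a j * z ^ (j - 1)) = 0"
  shows "(companion n a ^\<^sub>m k) *\<^sub>v vec n (\<lambda>i. z ^ (n - 1 - i)) = z ^ k \<cdot>\<^sub>v vec n (\<lambda>i. z ^ (n - 1 - i))"
proof (induction k)
  case (Suc k)
  have C: "companion n a \<in> carrier_mat n n" by (rule companion_carrier)
  then show ?case
    using Suc companion_mult_vec_powers[OF assms]
    by (simp add: assoc_mult_mat_vec[OF pow_carrier_mat[OF C] C]
        mult_mat_vec[OF pow_carrier_mat[OF C]] smult_smult_assoc)
qed (simp add: companion_def)

lemma frow_sum_powers:
  assumes "1 \<le> n" "z ^ n + (\<Sum>j=1..n. a j * z ^ (j - 1)) = 0"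
  shows "(\<Sum>j=1..n. frow n a k j * z ^ (j - 1)) = z ^ (n - 1 + k)"
proof -
  have "(\<Sum>j=1..n. frow n a k j * z ^ (j - 1))
      = (\<Sum>l<n. (companion n a ^\<^sub>m k) $$ (0, l) * z ^ (n - 1 - l))"
    unfolding frow_def by (rule sum_reverse_powers)
  also have "\<dots> = ((companion n a ^\<^sub>m k) *\<^sub>v vec n (\<lambda>i. z ^ (n - 1 - i))) $ 0"
    using assms(1) companion_carrier[of n a] by (simp add: scalar_prod_def lessThan_atLeast0)
  also have "\<dots> = z ^ k * z ^ (n - 1)"
    unfolding companion_pow_mult_vec_powers[OF assms] using assms(1) by simp
  finally show ?thesis by (simp add: power_add)
qed

lemma power2_mult_sum_powers:
  fixes x :: real
  assumes "2 \<le> n"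
  shows "x^2 * (\<Sum>j=1..n. x^(j-1)) = x^n + x^(n+1) + (\<Sum>j=3..n. x^(j-1))"
  using assms
proof (induction n rule: nat_induct_at_least)
  case base
  then show ?case by (simp add: numeral_2_eq_2 numeral_3_eq_3 power2_eq_square algebra_simps)
next
  case (Suc n)
  have "(\<Sum>j=3..Suc n. x^(j-1)) = (\<Sum>j=3..n. x^(j-1)) + x^n"
    using Suc.hyps by (simp add: numeral_3_eq_3)
  moreover have "x^2 * (\<Sum>j=1..Suc n. x^(j-1)) = x^2 * (\<Sum>j=1..n. x^(j-1)) + x^(Suc n + 1)"
    by (simp add: algebra_simps power_add power2_eq_square)
  moreover have "x^(Suc n) = x^(n+1)" by simp
  ultimately show ?case using Suc.IH by linarith
qed

lemma power4_mult_sum_powers_le: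
  fixes x :: real
  assumes "0 \<le> x"
  shows "x^4 * (\<Sum>j=1..n. x^(j-1)) \<le> (\<Sum>j=1..n. x^(j-1)) + x^n + x^(n+1) + x^(n+2) + x^(n+3)"
proof (induction n)
  case 0
  then show ?case using assms by simp
next
  case (Suc n)
  then show ?case by (simp add: distrib_left power_add mult.commute eval_nat_numeral)
qed

lemma cinner_frow_one: "cinner {1..n} (frow n a 1) x = - cinner {1..n} a x"
  unfolding cinner_def sum_negf[symmetric] by (intro sum.cong) (auto simp: frow_one[unfolded One_nat_def])

lemma sqnorm_frow_one: "sqnorm {1..n} (frow n a 1) = sqnorm {1..n} a"
  unfolding sqnorm_def by (intro sum.cong) (auto simp: frow_one[unfolded One_nat_def])

lemma delta_eq: "delta n a = eig_max2 (sqnorm {1..n} (frow n a 1)) (sqnorm {1..n} (bco n a))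
    ((cmod (cinner {1..n} (frow n a 1) (bco n a)))^2)"
proof -
  have "cinner {1..n} (bco n a) (frow n a 1) = gamma n a"
    unfolding gamma_def cinner_def sum_negf[symmetric] by (intro sum.cong) (auto simp: frow_one[unfolded One_nat_def])
  then have "cmod (cinner {1..n} (frow n a 1) (bco n a)) = cmod (gamma n a)"
    by (metis cmod_cinner_commute)
  then show ?thesis
    unfolding delta_def eig_max2_def sqnorm_frow_one by (simp add: alpha_def beta_def sqnorm_def)
qed

lemma delta'_eq: "delta' n a = eig_max2 (sqnorm {3..n} (frow n a 1)) (sqnorm {3..n} (bco n a))
    ((cmod (cinner {3..n} (frow n a 1) (bco n a)))^2)"
proof -
  have "sqnorm {3..n} (frow n a 1) = alpha' n a"
    unfolding alpha'_def sqnorm_def by (intro sum.cong) (auto simp: frow_one[unfolded One_nat_def])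
  moreover have "cinner {3..n} (bco n a) (frow n a 1) = gamma' n a"
    unfolding gamma'_def cinner_def sum_negf[symmetric] by (intro sum.cong) (auto simp: frow_one[unfolded One_nat_def])
  ultimately show ?thesis
    unfolding delta'_def eig_max2_def beta'_def sqnorm_def by (metis cmod_cinner_commute)
qed

lemma delta1_eq: "delta1 n a = eig_max2 (sqnorm {1..n} (dco n a)) (sqnorm {1..n} (cco n a))
    ((cmod (cinner {1..n} (dco n a) (cco n a)))^2)"
  unfolding delta1_def eig_max2_def alpha1_def beta1_def gamma1_def sqnorm_def cinner_def ..

lemma delta2_eq:
  fixes n :: nat and a :: "nat \<Rightarrow> complex"
  defines "A \<equiv> cinner {1..n} (frow n a 1)" and "B \<equiv> cinner {1..n} (bco n a)"
  shows "delta2 n a = eig_max2 ((cmod (A (dco n a)))^2 + (cmod (B (dco n a)))^2)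
    ((cmod (A (cco n a)))^2 + (cmod (B (cco n a)))^2)
    ((cmod (cnj (A (dco n a)) * A (cco n a) + cnj (B (dco n a)) * B (cco n a)))^2)"
proof -
  have "A (dco n a) = - cnj (gamma3 n a)" "A (cco n a) = - cnj (gamma5 n a)"
    "B (dco n a) = cnj (gamma2 n a)" "B (cco n a) = cnj (gamma4 n a)"
    unfolding A_def B_def cinner_frow_one gamma2_def gamma3_def gamma4_def gamma5_def
    by (simp_all add: cinner_commute[of _ a] cinner_commute[of _ "bco n a"] cinner_def mult.commute)
  then show ?thesis
    unfolding delta2_def eig_max2_def Let_def by (simp add: add.commute)
qed

lemma cinner_powers_frow_combination:
  assumes "1 \<le> n" "z ^ n + (\<Sum>j=1..n. a j * z ^ (j - 1)) = 0"
  shows "cinner {1..n} (\<lambda>j. z ^ (j - 1))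
      (\<lambda>j. cnj (frow n a k j) * z ^ (n - 1 + k) + cnj (frow n a l j) * z ^ (n - 1 + l))
    = complex_of_real ((cmod (z ^ (n - 1 + k)))^2 + (cmod (z ^ (n - 1 + l)))^2)"
  unfolding cinner_combination_right frow_sum_powers[OF assms] of_real_add complex_norm_square ..

lemma zero_norm_pow4_le:
  assumes "2 \<le> n" and root: "z ^ n + (\<Sum>j=1..n. a j * z ^ (j - 1)) = 0"
  shows "cmod z ^ 4 \<le> eig_max2 (delta n a) 1 (delta' n a)"
proof -
  define w where "w = (\<lambda>j::nat. z ^ (j - 1))"
  define q where "q = (\<lambda>j. cnj (frow n a 1 j) * z ^ n + cnj (bco n a j) * z ^ (n + 1))"
  define y where "y = (\<lambda>j. if 3 \<le> j then w j else 0)"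
  define P where "P = (cmod (z ^ n))^2 + (cmod (z ^ (n + 1)))^2"
  define W2 where "W2 = sqnorm {3..n} w"
  have nonneg: "0 \<le> delta n a" "0 \<le> delta' n a" "0 \<le> P" "0 \<le> W2"
    unfolding delta_eq delta'_eq P_def W2_def by (simp_all add: eig_max2_nonneg sqnorm_nonneg)
  have "n - 1 + 1 = n" "n - 1 + 2 = n + 1" using assms(1) by simp_all
  then have "cinner {1..n} w q = complex_of_real P"
    using cinner_powers_frow_combination[of n z a 1 2] assms
    unfolding w_def q_def P_def bco_def by simp
  moreover have "cinner {1..n} w y = complex_of_real W2"
    unfolding y_def W2_def of_real_sqnorm by (simp add: cinner_extend_zero)
  ultimately have pairing: "Re (cinner {1..n} w (\<lambda>j. q j + y j)) = P + W2"
    by (simp add: cinner_add_right)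
  have q_le: "sqnorm J q \<le> eig_max2 (sqnorm J (frow n a 1)) (sqnorm J (bco n a))
      ((cmod (cinner J (frow n a 1) (bco n a)))^2) * P" for J
    using sqnorm_combination_le[of J "frow n a 1" "z ^ n" "bco n a" "z ^ (n + 1)"]
    unfolding q_def P_def by simp
  have "Re (cinner {1..n} q y) \<le> cmod (cinner {3..n} q w)"
    using complex_Re_le_cmod cinner_extend_zero[of 1 3 n q w] unfolding y_def by simp
  also have "\<dots> \<le> sqrt (sqnorm {3..n} q) * sqrt W2"
    unfolding W2_def by (rule cinner_Cauchy_Schwarz)
  also have "\<dots> \<le> sqrt (delta' n a * P) * sqrt W2"
    using q_le[of "{3..n}"] nonneg unfolding delta'_eq by (intro mult_right_mono real_sqrt_le_mono) simp_all
  finally have "Re (cinner {1..n} q y) \<le> sqrt (delta' n a * P * W2)"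
    by (simp add: real_sqrt_mult)
  moreover have "sqnorm {1..n} y \<le> 1 * W2"
    unfolding y_def W2_def by (simp add: sqnorm_extend_zero)
  ultimately have "sqnorm {1..n} (\<lambda>j. q j + y j) \<le> eig_max2 (delta n a) 1 (delta' n a) * (P + W2)"
    using q_le[of "{1..n}"] nonneg unfolding delta_eq by (intro sqnorm_add_le_eig_max2) simp_all
  then have "P + W2 \<le> eig_max2 (delta n a) 1 (delta' n a) * sqnorm {1..n} w"
    using Re_cinner_le_of_sqnorm_le[of "{1..n}" "\<lambda>j. q j + y j" _ w] nonneg
    unfolding pairing by (simp add: eig_max2_nonneg)
  moreover have "cmod z ^ 4 * sqnorm {1..n} w = P + W2"
    using power2_mult_sum_powers[OF assms(1), of "cmod z ^ 2"]
    unfolding w_def P_def W2_def sqnorm_powers norm_power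
    by (simp add: power_mult[symmetric] power_mult_distrib mult.commute)
  ultimately have "cmod z ^ 4 * sqnorm {1..n} w \<le> eig_max2 (delta n a) 1 (delta' n a) * sqnorm {1..n} w"
    by simp
  moreover have "0 < sqnorm {1..n} w" unfolding w_def using assms(1) by (intro sqnorm_powers_pos) simp
  ultimately show ?thesis by (rule mult_right_le_imp_le)
qed

lemma Re_cinner_rows_le:
  "Re (cinner {1..n} (\<lambda>j. cnj (dco n a j) * u + cnj (cco n a j) * v)
      (\<lambda>j. cnj (frow n a 1 j) * x + cnj (bco n a j) * y))
    \<le> sqrt (delta2 n a * ((cmod u)^2 + (cmod v)^2) * ((cmod x)^2 + (cmod y)^2))"
proof -
  define A where "A = cinner {1..n} (frow n a 1)"
  define B where "B = cinner {1..n} (bco n a)"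
  have "Re (cinner {1..n} (\<lambda>j. cnj (dco n a j) * u + cnj (cco n a j) * v)
      (\<lambda>j. cnj (frow n a 1 j) * x + cnj (bco n a j) * y))
    \<le> cmod (cnj x * (A (dco n a) * u + A (cco n a) * v) + cnj y * (B (dco n a) * u + B (cco n a) * v))"
    unfolding cinner_combinations A_def B_def by (rule complex_Re_le_cmod)
  also have "\<dots> \<le> sqrt ((cmod x)^2 + (cmod y)^2)
      * sqrt ((cmod (A (dco n a) * u + A (cco n a) * v))^2 + (cmod (B (dco n a) * u + B (cco n a) * v))^2)"
    by (rule cmod_cnj_mult_add_le)
  also have "\<dots> \<le> sqrt ((cmod x)^2 + (cmod y)^2) * sqrt (delta2 n a * ((cmod u)^2 + (cmod v)^2))"
    unfolding delta2_eq A_def[symmetric] B_def[symmetric]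
    by (intro mult_left_mono real_sqrt_le_mono matrix2_norm_le) simp
  finally show ?thesis by (simp add: real_sqrt_mult ac_simps)
qed

lemma zero_norm_pow8_le:
  assumes "2 \<le> n" and root: "z ^ n + (\<Sum>j=1..n. a j * z ^ (j - 1)) = 0"
  shows "cmod z ^ 8 \<le> eig_max2 (delta1 n a) (delta n a) (delta2 n a) + 1"
proof -
  define w where "w = (\<lambda>j::nat. z ^ (j - 1))"
  define u where "u = (\<lambda>j. cnj (dco n a j) * z ^ (n + 3) + cnj (cco n a j) * z ^ (n + 2))"
  define q where "q = (\<lambda>j. cnj (frow n a 1 j) * z ^ n + cnj (bco n a j) * z ^ (n + 1))"
  define Q where "Q = (cmod (z ^ (n + 3)))^2 + (cmod (z ^ (n + 2)))^2"
  define P where "P = (cmod (z ^ n))^2 + (cmod (z ^ (n + 1)))^2"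
  define mu where "mu = eig_max2 (delta1 n a) (delta n a) (delta2 n a)"
  have nonneg: "0 \<le> delta1 n a" "0 \<le> delta2 n a" "0 \<le> Q" "0 \<le> P"
    unfolding delta1_eq delta2_eq Q_def P_def by (simp_all add: eig_max2_nonneg sqnorm_nonneg)
  have "n - 1 + 1 = n" "n - 1 + 2 = n + 1" "n - 1 + 3 = n + 2" "n - 1 + 4 = n + 3"
    using assms(1) by simp_all
  then have "cinner {1..n} w u = complex_of_real Q" "cinner {1..n} w q = complex_of_real P"
    using cinner_powers_frow_combination[of n z a 4 3] cinner_powers_frow_combination[of n z a 1 2] assms
    unfolding w_def u_def q_def Q_def P_def dco_def cco_def bco_def by (simp_all add: add.commute)
  then have pairing: "Re (cinner {1..n} w (\<lambda>j. u j + q j)) = Q + P"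
    by (simp add: cinner_add_right)
  have "sqnorm {1..n} u \<le> delta1 n a * Q"
    using sqnorm_combination_le[of "{1..n}" "dco n a" "z ^ (n + 3)" "cco n a" "z ^ (n + 2)"]
    unfolding u_def Q_def delta1_eq by simp
  moreover have "sqnorm {1..n} q \<le> delta n a * P"
    using sqnorm_combination_le[of "{1..n}" "frow n a 1" "z ^ n" "bco n a" "z ^ (n + 1)"]
    unfolding q_def P_def delta_eq by simp
  moreover have "Re (cinner {1..n} u q) \<le> sqrt (delta2 n a * Q * P)"
    unfolding u_def q_def Q_def P_def by (rule Re_cinner_rows_le)
  ultimately have "sqnorm {1..n} (\<lambda>j. u j + q j) \<le> mu * (Q + P)"
    unfolding mu_def using nonneg by (intro sqnorm_add_le_eig_max2)
  then have "Q + P \<le> mu * sqnorm {1..n} w"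
    using Re_cinner_le_of_sqnorm_le[of "{1..n}" "\<lambda>j. u j + q j" mu w] nonneg
    unfolding pairing mu_def by (simp add: eig_max2_nonneg)
  moreover have "cmod z ^ 8 * sqnorm {1..n} w \<le> sqnorm {1..n} w + P + Q"
    using power4_mult_sum_powers_le[of "cmod z ^ 2" n]
    unfolding w_def P_def Q_def sqnorm_powers norm_power
    by (simp add: power_mult[symmetric] power_mult_distrib mult.commute add.assoc)
  ultimately have "cmod z ^ 8 * sqnorm {1..n} w \<le> (mu + 1) * sqnorm {1..n} w"
    by (simp add: algebra_simps)
  moreover have "0 < sqnorm {1..n} w" unfolding w_def using assms(1) by (intro sqnorm_powers_pos) simp
  ultimately show ?thesis unfolding mu_def by (rule mult_right_le_imp_le)
qed

theorem mainTheorem15: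
  fixes n :: nat and a :: "nat \<Rightarrow> complex" and z :: complex
  assumes "n \<ge> 2" and "a 1 \<noteq> 0"
    and "z ^ n + (\<Sum>j=1..n. a j * z ^ (j - 1)) = 0"
  shows "cmod z \<le> sqrt (
      (1/2) * sqrt ((delta n a + 1 + sqrt ((delta n a - 1)^2 + 4 * delta' n a)) / 2)
    + (1/2) * root 4 ((delta1 n a + delta n a
          + sqrt ((delta1 n a - delta n a)^2 + 4 * delta2 n a)) / 2 + 1))"
proof -
  define lam where "lam = eig_max2 (delta n a) 1 (delta' n a)"
  define mu where "mu = eig_max2 (delta1 n a) (delta n a) (delta2 n a)"
  have "(cmod z ^ 2)^2 \<le> lam"
    using zero_norm_pow4_le[OF assms(1,3)] unfolding lam_def by (simp flip: power_mult)
  then have "cmod z ^ 2 \<le> sqrt lam" by (rule real_le_rsqrt)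
  moreover have "(cmod z ^ 2)^4 \<le> mu + 1"
    using zero_norm_pow8_le[OF assms(1,3)] unfolding mu_def by (simp flip: power_mult)
  then have "cmod z ^ 2 \<le> root 4 (mu + 1)"
    by (metis real_root_le_mono real_root_power_cancel norm_ge_zero zero_le_power zero_less_numeral)
  ultimately have "cmod z ^ 2 \<le> (1/2) * sqrt lam + (1/2) * root 4 (mu + 1)" by linarith
  then have "cmod z \<le> sqrt ((1/2) * sqrt lam + (1/2) * root 4 (mu + 1))" by (rule real_le_rsqrt)
  then show ?thesis unfolding lam_def mu_def eig_max2_def by simp
qed

end
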